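(* Let $U(0)\geqslant 1$ and $d\geqslant 1$ be integers, $U(n)=U(0)+nd$, and let $S(n)=\overline{U(n)U(n-1)\cdots U(0)}$ (left-concatenation), so $S(0)=U(0)$. Let $n\geqslant 0$ and put $$l=\left\lceil \log_{10}(n d + S(0) + 1)\right\rceil,\qquad t_l=\left\lfloor \frac{10^{l-1}-S(0)}{d}\right\rfloor .$$ Assume $t_l\geqslant 0$ and $U(t_l+2)<10^l$. Let $p_l$ be the number of decimal digits of $S(t_l)$, let $s_0=S(t_l)$, $s_1=S(t_l+1)$, $s_2=S(t_l+2)$, and $$\alpha_l=\frac{s_2-2\cdot 10^l s_1+10^{2l}s_0}{(10^l-1)^2},\qquad \mu_l=\frac{\left((10^l-1)U(t_l)-d\right)10^{p_l}}{(10^l-1)^2},\qquad \theta_l=\frac{d\cdot 10^{p_l}}{10^l-1}.$$ Then $$S(n)=\alpha_l+\mu_l\,10^{l(n-t_l)}+\theta_l\,(n-t_l)\,10^{l(n-t_l)}.$$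
   Context: For positive integers $a_0,\ldots,a_k$, $\overline{a_0a_1\cdots a_k}$ denotes the integer whose decimal expansion is the decimal expansion of $a_0$ followed by that of $a_1$, ..., followed by that of $a_k$. Note $l$ is the number of decimal digits of $U(n)$. *)

theory Defs
  imports Complex_Main
begin

fun ndigits :: "nat \<Rightarrow> nat" where
  "ndigits x = (if x < 10 then 1 else 1 + ndigits (x div 10))"

definition dconcat :: "nat \<Rightarrow> nat \<Rightarrow> nat" where
  "dconcat a b = a * 10 ^ ndigits b + b"

definition U :: "nat \<Rightarrow> nat \<Rightarrow> nat \<Rightarrow> nat" where
  "U u0 d n = u0 + n * d"

fun S :: "nat \<Rightarrow> nat \<Rightarrow> nat \<Rightarrow> nat" where
  "S u0 d 0 = U u0 d 0"
| "S u0 d (Suc n) = dconcat (U u0 d (Suc n)) (S u0 d n)"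

end

theory Submission
  imports Defs "HOL-Library.Log_Nat"
begin

(* As long as U(t_l + 1), ..., U(n) all have exactly l digits, every left concatenation shifts
   the number built so far by 10^l, so S(t_l + m) = S(t_l) + 10^(p_l) * sum_{k<m} U(t_l+k+1) 10^(lk).
   This is an arithmetico-geometric sum, whose closed form is alpha + (mu + theta m) 10^(lm).
   The choice of l and t_l means exactly U(t_l) <= 10^(l-1) < U(t_l + 1) and U(n) < 10^l,
   and alpha is recovered from the values at m = 0, 1, 2 as a second difference. *)

declare ndigits.simps [simp del]

lemma ndigits_less_10: "x < 10 \<Longrightarrow> ndigits x = 1"
  by (subst ndigits.simps) simp

lemma ndigits_ge_10: "10 \<le> x \<Longrightarrow> ndigits x = ndigits (x div 10) + 1"
  by (subst ndigits.simps) simp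

lemma ndigits_eq_floorlog: "0 < x \<Longrightarrow> ndigits x = floorlog 10 x"
proof (induction x rule: ndigits.induct)
  case (1 x)
  show ?case
  proof (cases "x < 10")
    case True
    then show ?thesis
      using "1.prems"
      by (simp add: ndigits_less_10 floorlog_def floor_log_nat_eq_if[of 10 0 x, simplified])
  next
    case False
    then have pos: "0 < x div 10" by simp
    have "\<lfloor>log 10 (real x)\<rfloor> = \<lfloor>log 10 (real (x div 10))\<rfloor> + 1"
      using floor_log_div[of 10 x] pos by simp
    moreover have "0 \<le> \<lfloor>log 10 (real (x div 10))\<rfloor>" using pos by simp
    moreover have "ndigits x = ndigits (x div 10) + 1" using False by (simp add: ndigits_ge_10)
    ultimately show ?thesis using "1.IH" False pos by (simp add: floorlog_def nat_add_distrib)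
  qed
qed

lemma less_power_ndigits: "x < 10 ^ ndigits x"
  by (cases "x = 0") (simp_all add: ndigits_less_10 ndigits_eq_floorlog floorlog_bounds)

lemma power_ndigits_le: "0 < x \<Longrightarrow> 10 ^ (ndigits x - 1) \<le> x"
  using floorlog_bounds[of x 10] by (simp add: ndigits_eq_floorlog)

lemma ndigits_eqI:
  assumes "10 ^ (k - 1) \<le> x" and "x < 10 ^ k"
  shows "ndigits x = k"
proof -
  have "0 < x" using assms(1) by (metis less_le_trans zero_less_numeral zero_less_power)
  moreover have "floorlog 10 x \<le> k" using assms(2) by (simp add: floorlog_leI)
  moreover have "k \<le> floorlog 10 x" using assms(1) by (simp add: floorlog_geI)
  ultimately show ?thesis by (simp add: ndigits_eq_floorlog)
qed

lemma ndigits_dconcat: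
  assumes "0 < a"
  shows "ndigits (dconcat a b) = ndigits a + ndigits b"
proof (rule ndigits_eqI)
  have "1 \<le> ndigits a" using less_power_ndigits[of a] assms by (cases "ndigits a") auto
  then have "(10::nat) ^ (ndigits a + ndigits b - 1) = 10 ^ (ndigits a - 1) * 10 ^ ndigits b"
    by (simp flip: power_add)
  also have "\<dots> \<le> a * 10 ^ ndigits b" using power_ndigits_le[OF assms] by simp
  finally show "10 ^ (ndigits a + ndigits b - 1) \<le> dconcat a b" by (simp add: dconcat_def)
  have "dconcat a b < (a + 1) * 10 ^ ndigits b"
    using less_power_ndigits[of b] by (simp add: dconcat_def)
  also have "\<dots> \<le> 10 ^ ndigits a * 10 ^ ndigits b"
    using less_power_ndigits[of a] by (intro mult_right_mono) auto
  finally show "dconcat a b < 10 ^ (ndigits a + ndigits b)" by (simp add: power_add)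
qed

lemma U_mono: "i \<le> j \<Longrightarrow> U u0 d i \<le> U u0 d j"
  by (simp add: U_def mult_right_mono)

lemma S_block_expansion:
  assumes "10 ^ (l - 1) \<le> U u0 d (T + 1)" and "U u0 d (T + m) < 10 ^ l"
  shows "ndigits (S u0 d (T + m)) = ndigits (S u0 d T) + l * m
    \<and> S u0 d (T + m) = S u0 d T + 10 ^ ndigits (S u0 d T) * (\<Sum>k<m. U u0 d (T + Suc k) * 10 ^ (l * k))"
  using assms(2)
proof (induction m)
  case 0
  then show ?case by simp
next
  case (Suc m)
  have "U u0 d (T + m) < 10 ^ l"
    using Suc.prems U_mono[of "T + m" "T + Suc m" u0 d] by linarith
  then have IH: "ndigits (S u0 d (T + m)) = ndigits (S u0 d T) + l * m"
    "S u0 d (T + m) = S u0 d T + 10 ^ ndigits (S u0 d T) * (\<Sum>k<m. U u0 d (T + Suc k) * 10 ^ (l * k))"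
    using Suc.IH by auto
  have lower: "10 ^ (l - 1) \<le> U u0 d (T + Suc m)"
    using assms(1) U_mono[of "T + 1" "T + Suc m" u0 d] by linarith
  then have "0 < U u0 d (T + Suc m)" by (metis less_le_trans zero_less_numeral zero_less_power)
  moreover have "ndigits (U u0 d (T + Suc m)) = l" using ndigits_eqI lower Suc.prems by blast
  ultimately have "ndigits (S u0 d (T + Suc m)) = l + ndigits (S u0 d (T + m))"
    by (simp add: ndigits_dconcat)
  moreover have
    "S u0 d (T + Suc m) = U u0 d (T + Suc m) * 10 ^ ndigits (S u0 d (T + m)) + S u0 d (T + m)"
    by (simp add: dconcat_def)
  ultimately show ?case
    using IH by (simp add: power_add algebra_simps)
qed

(* For x \<noteq> 1 the hypotheses determine B = ((x - 1) a - d) / (x - 1)^2 and C = d / (x - 1);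
   stated this way the identity telescopes in any commutative ring. *)
lemma sum_arith_geom:
  fixes a d B C x :: "'a :: comm_ring_1"
  assumes "a = B * (x - 1) + C" and "d = C * (x - 1)"
  shows "(\<Sum>k<m. (a + of_nat (Suc k) * d) * x ^ k) = (B + C * of_nat m) * x ^ m - B"
  by (induction m) (simp_all add: assms algebra_simps)

lemma arith_geom_constant_term:
  fixes A B C x :: "'a :: field"
  assumes "x \<noteq> 1" and "\<And>k. k \<le> 2 \<Longrightarrow> s k = A + (B + C * of_nat k) * x ^ k"
  shows "(s 2 - 2 * x * s 1 + x\<^sup>2 * s 0) / (x - 1)\<^sup>2 = A"
proof -
  have "s 2 - 2 * x * s 1 + x\<^sup>2 * s 0 = A * (x - 1)\<^sup>2"
    using assms(2)[of 0] assms(2)[of 1] assms(2)[of 2] by (simp add: power2_eq_square algebra_simps)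
  then show ?thesis using assms(1) by simp
qed

lemma ceiling_log_bounds:
  fixes b x :: real
  assumes "1 < b" and "1 < x"
  shows "b ^ (nat \<lceil>log b x\<rceil> - 1) < x" and "x \<le> b ^ nat \<lceil>log b x\<rceil>"
proof -
  define k where "k = nat \<lceil>log b x\<rceil> - 1"
  have "0 < log b x" using assms by simp
  then have "1 \<le> \<lceil>log b x\<rceil>" by simp
  then have ceiling: "\<lceil>log b x\<rceil> = int k + 1" and nat_ceiling: "nat \<lceil>log b x\<rceil> = k + 1"
    unfolding k_def by arith+
  then have "b powr real k < x \<and> x \<le> b powr (real k + 1)"
    using ceiling_log_eq_powr_iff[of x b k] assms by (simp add: add.commute)
  moreover have "b powr real k = b ^ k" and "b powr (real k + 1) = b ^ Suc k"
    using assms(1) powr_realpow[of b k] powr_realpow[of b "Suc k"] by (simp_all add: add.commute)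
  ultimately show "b ^ (nat \<lceil>log b x\<rceil> - 1) < x" and "x \<le> b ^ nat \<lceil>log b x\<rceil>"
    using nat_ceiling by simp_all
qed

lemma S_block_closed_form:
  fixes u0 d l T m :: nat
  defines "\<mu> \<equiv> ((10 ^ l - 1) * real (U u0 d T) - real d) * 10 ^ ndigits (S u0 d T) / (10 ^ l - 1)\<^sup>2"
    and "\<theta> \<equiv> real d * 10 ^ ndigits (S u0 d T) / (10 ^ l - 1)"
  assumes "1 \<le> l" and "10 ^ (l - 1) \<le> U u0 d (T + 1)" and "U u0 d (T + m) < 10 ^ l"
  shows "real (S u0 d (T + m)) = real (S u0 d T) - \<mu> + (\<mu> + \<theta> * real m) * (10 ^ l) ^ m"
proof -
  define x :: real where "x = 10 ^ l"
  define q :: real where "q = 10 ^ ndigits (S u0 d T)"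
  have "1 < x" unfolding x_def using \<open>1 \<le> l\<close> by (intro one_less_power) simp_all
  then have "x - 1 \<noteq> 0" by simp
  then have coeffs: "q * real (U u0 d T) = \<mu> * (x - 1) + \<theta>" "q * real d = \<theta> * (x - 1)"
    unfolding \<mu>_def \<theta>_def x_def [symmetric] q_def [symmetric]
    by (simp_all add: field_simps, simp add: power2_eq_square algebra_simps)
  have "real (S u0 d (T + m)) = real (S u0 d T) + q * (\<Sum>k<m. real (U u0 d (T + Suc k)) * x ^ k)"
    using S_block_expansion[OF assms(4,5)] by (simp add: x_def q_def power_mult)
  also have "q * (\<Sum>k<m. real (U u0 d (T + Suc k)) * x ^ k)
      = (\<Sum>k<m. (q * real (U u0 d T) + of_nat (Suc k) * (q * real d)) * x ^ k)"
    by (simp add: sum_distrib_left U_def algebra_simps)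
  also have "\<dots> = (\<mu> + \<theta> * real m) * x ^ m - \<mu>"
    by (rule sum_arith_geom[OF coeffs])
  finally show ?thesis by (simp add: x_def)
qed

lemma U_floor_bounds:
  assumes "0 < d" and "0 \<le> t" and "t = \<lfloor>(real y - real u0) / real d\<rfloor>"
  shows "U u0 d (nat t) \<le> y" and "y < U u0 d (nat t + 1)"
proof -
  have "real_of_int t \<le> (real y - real u0) / real d" using assms(3) by simp
  then have "real (nat t) * real d \<le> real y - real u0"
    using assms(1,2) by (simp add: pos_le_divide_eq)
  then show "U u0 d (nat t) \<le> y" unfolding U_def by (simp flip: of_nat_mult of_nat_add)
  have "(real y - real u0) / real d < real_of_int t + 1"
    using assms(3) by (simp add: real_of_int_floor_add_one_gt)
  then have "real y - real u0 < (real (nat t) + 1) * real d"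
    using assms(1,2) by (simp add: pos_divide_less_eq)
  then show "y < U u0 d (nat t + 1)"
    unfolding U_def by (simp add: algebra_simps flip: of_nat_mult of_nat_add)
qed

lemma digit_block_bounds:
  fixes u0 d n l :: nat and t :: int
  assumes "1 \<le> u0" and "1 \<le> d"
    and l_def: "l = nat \<lceil>log 10 (real (n * d + u0 + 1))\<rceil>"
    and t_def: "t = \<lfloor>(10 ^ (l - 1) - real u0) / real d\<rfloor>" and "0 \<le> t"
  shows "1 \<le> l" and "10 ^ (l - 1) < U u0 d (nat t + 1)" and "nat t \<le> n" and "U u0 d n < 10 ^ l"
proof -
  define N where "N = U u0 d n + 1"
  have "1 < N" using \<open>1 \<le> u0\<close> by (simp add: N_def U_def)
  moreover have "l = nat \<lceil>log 10 (real N)\<rceil>" by (simp add: l_def N_def U_def add.commute)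
  ultimately have "real (10 ^ (l - 1)) < real N" and "real N \<le> real (10 ^ l)"
    using ceiling_log_bounds[of 10 "real N"] by simp_all
  then have N_lower: "10 ^ (l - 1) < N" and N_upper: "N \<le> 10 ^ l"
    unfolding of_nat_less_iff of_nat_le_iff .
  show "1 \<le> l" using \<open>1 < N\<close> N_upper by (cases l) auto
  show "U u0 d n < 10 ^ l" using N_upper by (simp add: N_def)
  have "U u0 d (nat t) \<le> 10 ^ (l - 1)" and "10 ^ (l - 1) < U u0 d (nat t + 1)"
    using U_floor_bounds[of d t "10 ^ (l - 1)" u0] assms(2,5) t_def by simp_all
  then show "10 ^ (l - 1) < U u0 d (nat t + 1)" by simp
  from \<open>U u0 d (nat t) \<le> 10 ^ (l - 1)\<close> have "U u0 d (nat t) \<le> U u0 d n" using N_lower by (simp add: N_def)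
  then show "nat t \<le> n" using \<open>1 \<le> d\<close> by (simp add: U_def)
qed

theorem theorem2:
  fixes u0 d n :: nat and l :: nat and t :: int
  assumes "u0 \<ge> 1" and "d \<ge> 1"
    and l_def: "l = nat \<lceil>log 10 (real (n * d + S u0 d 0 + 1))\<rceil>"
    and t_def: "t = \<lfloor>(10 ^ (l - 1) - real (S u0 d 0)) / real d\<rfloor>"
    and "t \<ge> 0"
    and "U u0 d (nat t + 2) < 10 ^ l"
  shows "let p = ndigits (S u0 d (nat t));
             s0 = real (S u0 d (nat t));
             s1 = real (S u0 d (nat t + 1));
             s2 = real (S u0 d (nat t + 2));
             \<alpha> = (s2 - 2 * 10 ^ l * s1 + 10 ^ (2 * l) * s0) / (10 ^ l - 1)\<^sup>2;
             \<mu> = ((10 ^ l - 1) * real (U u0 d (nat t)) - real d) * 10 ^ p / (10 ^ l - 1)\<^sup>2;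
             \<theta> = real d * 10 ^ p / (10 ^ l - 1)
         in real (S u0 d n) = \<alpha> + \<mu> * (10::real) powi (int l * (int n - t))
              + \<theta> * (real n - of_int t) * (10::real) powi (int l * (int n - t))"
proof -
  define T where "T = nat t"
  define \<mu> where "\<mu> = ((10 ^ l - 1) * real (U u0 d T) - real d) * 10 ^ ndigits (S u0 d T) / (10 ^ l - 1)\<^sup>2"
  define \<theta> where "\<theta> = real d * 10 ^ ndigits (S u0 d T) / (10 ^ l - 1)"
  have S0: "S u0 d 0 = u0" by (simp add: U_def)
  note block = digit_block_bounds[OF assms(1,2) l_def [unfolded S0] t_def [unfolded S0] assms(5),
      folded T_def]
  have closed_form: "real (S u0 d (T + k)) = real (S u0 d T) - \<mu> + (\<mu> + \<theta> * real k) * (10 ^ l) ^ k"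
    if "U u0 d (T + k) < 10 ^ l" for k
    using S_block_closed_form[OF block(1) less_imp_le [OF block(2)] that] unfolding \<mu>_def \<theta>_def .
  have "(1::real) < 10 ^ l" using block(1) by (intro one_less_power) simp_all
  moreover have "real (S u0 d (T + k)) = real (S u0 d T) - \<mu> + (\<mu> + \<theta> * real k) * (10 ^ l) ^ k"
    if "k \<le> 2" for k
    using closed_form assms(6) U_mono[of "T + k" "T + 2" u0 d] that by (simp add: T_def)
  ultimately have alpha: "(real (S u0 d (T + 2)) - 2 * 10 ^ l * real (S u0 d (T + 1))
      + (10 ^ l)\<^sup>2 * real (S u0 d T)) / (10 ^ l - 1)\<^sup>2 = real (S u0 d T) - \<mu>"
    using arith_geom_constant_term[of "10 ^ l" "\<lambda>k. real (S u0 d (T + k))"] by simp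
  have "int l * (int n - t) = int (l * (n - T))" and n_minus_t: "real n - of_int t = real (n - T)"
    using block(3) assms(5) by (simp_all add: T_def of_nat_diff)
  then have powi: "(10::real) powi (int l * (int n - t)) = (10 ^ l) ^ (n - T)"
    by (simp only: power_int_of_nat power_mult)
  have "real (S u0 d n) = real (S u0 d T) - \<mu> + (\<mu> + \<theta> * real (n - T)) * (10 ^ l) ^ (n - T)"
    using closed_form[of "n - T"] block(3,4) by simp
  then show ?thesis
    unfolding Let_def T_def [symmetric] \<mu>_def [symmetric] \<theta>_def [symmetric] mult.commute [of 2 l]
      power_mult alpha powi n_minus_t
    by (simp add: algebra_simps)
qed

end
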